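(* Let $\epsilon\in\{-1,0,1\}$ and $f\in L^2(\Omega)$. (i) If $(u_h,\hat u_h)\in\mathbf V_h$ solves the H-IP problem, then $u_h\in V_h$ solves the UIP-DG problem. (ii) If $u_h\in V_h$ solves the UIP-DG problem and $\hat u_h$ is defined by $\hat u_h:=\{u_h\}_{\omega^\tau}-\varrho_1[\kappa\nabla_hu_h]$ on every interior face and $\hat u_h:=0$ on every boundary face, then $\hat u_h\in\hat V_h$ and $(u_h,\hat u_h)$ solves the H-IP problem; in particular, if the H-IP problem has a unique solution, $(u_h,\hat u_h)$ is that solution.
   Context: Setting. Let $\Omega\subset\mathbb R^d$, $d\in\{2,3\}$, be a bounded polyhedral Lipschitz domain. Let $\kappa:\Omega\to\mathbb R^{d\times d}$ be symmetric with $\kappa_{\min}|\xi|^2\le\xi^\top\kappa(x)\xi\le\kappa_{\max}|\xi|^2$ for all $\xi\in\mathbb R^d$ and a.e. $x$, where $0<\kappa_{\min}\le\kappa_{\max}<\infty$. Let $\mathcal T_h$ be a conforming affine simplicial mesh of $\Omega$ from a shape-regular family, with $h_E=\operatorname{diam}E$, $h=\max_Eh_E\le1$, and assume $\kappa$ is constant on each element, $\kappa_E:=\kappa|_E$. $\mathcal F_h=\mathcal F_h^i\cup\mathcal F_h^b$ is the set of faces (edges if $d=2$), split into interior and boundary faces; $\mathcal F_E$ is the set of faces of $E$, $n_{E,F}$ the unit outward normal to $F\in\mathcal F_E$, and $\eta_0:=\max_E\#\mathcal F_E$. For an interior face $F=\partial E_1\cap\partial E_2$, a subscript $i\in\{1,2\}$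 denotes the trace from $E_i$ and $n_i:=n_{E_i,F}$. $\nabla_h$ is the elementwise gradient; $(\cdot,\cdot)_{\mathcal T_h}:=\sum_E(\cdot,\cdot)_{L^2(E)}$, $\langle\cdot,\cdot\rangle_{\partial\mathcal T_h}:=\sum_E\sum_{F\in\mathcal F_E}\langle\cdot,\cdot\rangle_{L^2(F)}$ (traces from $E$), $\langle\cdot,\cdot\rangle_{\mathcal F}:=\sum_{F\in\mathcal F}\langle\cdot,\cdot\rangle_{L^2(F)}$ for a set $\mathcal F$ of faces. Fix $k\ge1$: $V_h:=\{v\in L^2(\Omega):v|_E\in\mathbb P_k(E)\ \forall E\}$, $\hat V_h:=\{\hat v\in L^2(\bigcup_{F\in\mathcal F_h}F):\hat v|_F\in\mathbb P_k(F)\ \forall F,\ \hat v|_F=0\ \forall F\in\mathcal F_h^b\}$, $\mathbf V_h:=V_h\times\hat V_h$ ($\mathbb P_k$ = polynomials of total degree $\le k$). Trace operators. For an interior face and a pair of weights $(\omega_1,\omega_2)$ with $\omega_1+\omega_2=1$ (boundary faces: $(1,0)$): $[\varphi]:=\varphi_1n_1+\varphi_2n_2$, $\{\varphi\}_\omega:=\omega_1\varphi_1+\omega_2\varphi_2$, $\{\varphi\}^*_\omega:=\omega_2\varphi_1+\omega_1\varphi_2$; on a boundary face $F\subset\partial E$: $[\varphi]:=\varphi|_En_{E,F}$, $\{\varphi\}_\omega=\{\varphi\}^*_\omega:=\varphi|_E$. Means of vector fields are componentwise; for a vector field $\mathbf b$, $[\mathbf b]:=\mathbf b_1\cdot n_1+\mathbf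 b_2\cdot n_2$ (scalar) on interior faces. HDG jump: $[\![(\varphi,\hat\varphi)]\!]|_{E,F}:=(\varphi|_E-\hat\varphi)n_{E,F}$ for $F\in\mathcal F_E$. Penalty and coefficients. Let $C_T>0$ be such that $\|w\|_{L^2(F)}^2\le C_T^2h_E^{-1}\|w\|_{L^2(E)}^2$ for all $E$, $F\in\mathcal F_E$, $w\in\mathbb P_k(E)$. Fix $\alpha_0>0$ and set $\tau|_{E,F}:=\alpha_0C_T^2\kappa_{E,F}h_E^{-1}$ with $\kappa_{E,F}:=n_{E,F}^\top\kappa_En_{E,F}$. On an interior face with $\tau_i:=\tau|_{E_i,F}$: $\omega^\tau_i:=\tau_i/(\tau_1+\tau_2)$, $\varrho_0:=\tau_1\tau_2/(\tau_1+\tau_2)$, $\varrho_1:=1/(\tau_1+\tau_2)$; on a boundary face $F\subset\partial E$: $\omega^\tau:=(1,0)$, $\varrho_0:=\tau|_{E,F}$. H-IP method. For $\epsilon\in\{-1,0,1\}$, $\sigma(v):=-\kappa\nabla_hv$, and for $\mathbf u=(u,\hat u)\in\mathbf V_h$, $\hat\sigma(\mathbf u):=\sigma(u)+\tau[\![\mathbf u]\!]$ on $\partial\mathcal T_h$ (double-valued). $\mathbf a_h^{(\epsilon)}(\mathbf u,\mathbf v):=(\kappa\nabla_hu,\nabla_hv)_{\mathcal T_h}+\langle\hat\sigma(\mathbf u),[\![\mathbf v]\!]\rangle_{\partial\mathcal T_h}+\epsilon\langle\sigma(v),[\![\mathbf u]\!]\rangle_{\partial\mathcal T_h}$ for $\mathbf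 u=(u,\hat u),\mathbf v=(v,\hat v)\in\mathbf V_h$. The H-IP problem: find $\mathbf u_h\in\mathbf V_h$ with $\mathbf a_h^{(\epsilon)}(\mathbf u_h,\mathbf v_h)=(f,v_h)_{\mathcal T_h}$ for all $\mathbf v_h=(v_h,\hat v_h)\in\mathbf V_h$. UIP-DG method. For $u,v$ with $u|_E,v|_E\in H^2(E)$ for all $E$: $a_h^{(\epsilon)}(u,v):=(\kappa\nabla_hu,\nabla_hv)_{\mathcal T_h}+a^c_h(u,v)+\epsilon\,a^c_h(v,u)+s^{(\epsilon)}_h(u,v)$, where $a^c_h(u,v):=-\langle\{\kappa\nabla_hu\}^*_{\omega^\tau},[v]\rangle_{\mathcal F_h}$ and $s_h^{(\epsilon)}(u,v):=\langle\varrho_0[u],[v]\rangle_{\mathcal F_h}-\epsilon\langle\varrho_1[\kappa\nabla_hu],[\kappa\nabla_hv]\rangle_{\mathcal F_h^i}$. The UIP-DG problem: find $u_h\in V_h$ with $a_h^{(\epsilon)}(u_h,v_h)=(f,v_h)_{\mathcal T_h}$ for all $v_h\in V_h$. *)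

theory Defs
  imports "HOL-Analysis.Analysis"
begin

definition lipschitz_domain :: "(real^'d) set \<Rightarrow> bool" where
  "lipschitz_domain \<Omega> \<longleftrightarrow> open \<Omega> \<and> bounded \<Omega> \<and> connected \<Omega> \<and> \<Omega> \<noteq> {} \<and>
     (\<forall>p\<in>frontier \<Omega>. \<exists>U \<xi> L (g::real^'d \<Rightarrow> real). open U \<and> p \<in> U \<and> norm \<xi> = 1 \<and>
        (\<forall>y z. \<bar>g y - g z\<bar> \<le> L * norm (y - z)) \<and>
        \<Omega> \<inter> U = {x\<in>U. x \<bullet> \<xi> < g (x - (x \<bullet> \<xi>) *\<^sub>R \<xi>)})"

definition polyhedral_domain :: "(real^'d) set \<Rightarrow> bool" where
  "polyhedral_domain \<Omega> \<longleftrightarrow> (\<exists>P. finite P \<and> (\<forall>S\<in>P. polytope S) \<and> closure \<Omega> = \<Union>P)"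

definition conforming_simplicial_mesh :: "(real^'d) set set \<Rightarrow> (real^'d) set \<Rightarrow> bool" where
  "conforming_simplicial_mesh T \<Omega> \<longleftrightarrow> finite T \<and> T \<noteq> {} \<and>
     (\<forall>E\<in>T. (int CARD('d)) simplex E) \<and>
     (\<forall>E1\<in>T. \<forall>E2\<in>T. E1 \<noteq> E2 \<longrightarrow> (E1 \<inter> E2) face_of E1 \<and> (E1 \<inter> E2) face_of E2) \<and>
     \<Union>T = closure \<Omega>"

definition faces :: "(real^'d) set set \<Rightarrow> (real^'d) set set" where
  "faces T = {F. \<exists>E\<in>T. F facet_of E}"

definition elem_faces :: "(real^'d) set \<Rightarrow> (real^'d) set set" where
  "elem_faces E = {F. F facet_of E}"

definition els :: "(real^'d) set set \<Rightarrow> (real^'d) set \<Rightarrow> (real^'d) set set" where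
  "els T F = {E\<in>T. F facet_of E}"

definition int_face :: "(real^'d) set set \<Rightarrow> (real^'d) set \<Rightarrow> bool" where
  "int_face T F \<longleftrightarrow> F \<in> faces T \<and> (\<exists>E1\<in>T. \<exists>E2\<in>T. E1 \<noteq> E2 \<and> F facet_of E1 \<and> F facet_of E2)"

definition bdry_face :: "(real^'d) set set \<Rightarrow> (real^'d) set \<Rightarrow> bool" where
  "bdry_face T F \<longleftrightarrow> F \<in> faces T \<and> \<not> int_face T F"

definition onormal :: "(real^'d) set \<Rightarrow> (real^'d) set \<Rightarrow> real^'d" where
  "onormal E F = (SOME n. norm n = 1 \<and> (\<forall>x\<in>F. \<forall>y\<in>E. n \<bullet> y \<le> n \<bullet> x))"

definition vol_int :: "(real^'d) set \<Rightarrow> (real^'d \<Rightarrow> real) \<Rightarrow> real" where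
  "vol_int E g = (LINT x:E|lebesgue. g x)"

text \<open>Integral with respect to the (d-1)-dimensional surface measure on a flat face F:
  the integral over the unit-height right prism F + [0,1] n (n a unit normal of F)
  of g composed with the orthogonal projection onto the affine hull of F.\<close>
definition fnormal :: "(real^'d) set \<Rightarrow> real^'d" where
  "fnormal F = (SOME n. norm n = 1 \<and> (\<forall>x\<in>F. \<forall>y\<in>F. n \<bullet> (x - y) = 0))"

definition face_int :: "(real^'d) set \<Rightarrow> (real^'d \<Rightarrow> real) \<Rightarrow> real" where
  "face_int F g =
     (let n = fnormal F; c = (SOME c. c \<in> F) in
      LINT x:{y + t *\<^sub>R n | y t. y \<in> F \<and> t \<in> {0..1}}|lebesgue. g (x - ((x - c) \<bullet> n) *\<^sub>R n))"

definition poly_fun :: "nat \<Rightarrow> (real^'d \<Rightarrow> real) \<Rightarrow> bool" where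
  "poly_fun k p \<longleftrightarrow> (\<exists>c :: ('d \<Rightarrow> nat) \<Rightarrow> real.
      p = (\<lambda>x. \<Sum>\<alpha>\<in>{\<alpha>::'d \<Rightarrow> nat. sum \<alpha> UNIV \<le> k}. c \<alpha> * (\<Prod>i\<in>UNIV. (x $ i) ^ (\<alpha> i))))"

text \<open>Broken polynomials: a family indexed by the elements; v E is the polynomial
  representing v on E (its traces on the faces of E are its values there).\<close>
definition Vh :: "(real^'d) set set \<Rightarrow> nat \<Rightarrow> ((real^'d) set \<Rightarrow> real^'d \<Rightarrow> real) \<Rightarrow> bool" where
  "Vh T k v \<longleftrightarrow> (\<forall>E\<in>T. poly_fun k (v E)) \<and> (\<forall>E. E \<notin> T \<longrightarrow> v E = (\<lambda>_. 0))"

definition Vhat :: "(real^'d) set set \<Rightarrow> nat \<Rightarrow> ((real^'d) set \<Rightarrow> real^'d \<Rightarrow> real) \<Rightarrow> bool" where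
  "Vhat T k w \<longleftrightarrow>
     (\<forall>F\<in>faces T. (\<exists>p. poly_fun k p \<and> (\<forall>x\<in>F. w F x = p x)) \<and> (\<forall>x. x \<notin> F \<longrightarrow> w F x = 0)) \<and>
     (\<forall>F. F \<notin> faces T \<longrightarrow> w F = (\<lambda>_. 0)) \<and>
     (\<forall>F. bdry_face T F \<longrightarrow> w F = (\<lambda>_. 0))"

definition grad :: "(real^'d \<Rightarrow> real) \<Rightarrow> real^'d \<Rightarrow> real^'d" where
  "grad u x = (\<chi> i. frechet_derivative u (at x) (axis i 1))"

definition kEF :: "((real^'d) set \<Rightarrow> real^'d^'d) \<Rightarrow> (real^'d) set \<Rightarrow> (real^'d) set \<Rightarrow> real" where
  "kEF K E F = onormal E F \<bullet> (K E *v onormal E F)"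

definition tau :: "((real^'d) set \<Rightarrow> real^'d^'d) \<Rightarrow> real \<Rightarrow> real \<Rightarrow> (real^'d) set \<Rightarrow> (real^'d) set \<Rightarrow> real" where
  "tau K \<alpha>0 CT E F = \<alpha>0 * CT\<^sup>2 * kEF K E F / diameter E"

definition omg where
  "omg T K \<alpha>0 CT E F =
     (if int_face T F then tau K \<alpha>0 CT E F / (\<Sum>E'\<in>els T F. tau K \<alpha>0 CT E' F) else 1)"

definition rho0 where
  "rho0 T K \<alpha>0 CT F =
     (if int_face T F then (\<Prod>E\<in>els T F. tau K \<alpha>0 CT E F) / (\<Sum>E\<in>els T F. tau K \<alpha>0 CT E F)
      else (\<Sum>E\<in>els T F. tau K \<alpha>0 CT E F))"

definition rho1 where
  "rho1 T K \<alpha>0 CT F = 1 / (\<Sum>E\<in>els T F. tau K \<alpha>0 CT E F)"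

definition jump where
  "jump T v F x = (\<Sum>E\<in>els T F. v E x *\<^sub>R onormal E F)"

definition njump where
  "njump T b F x = (\<Sum>E\<in>els T F. b E x \<bullet> onormal E F)"

definition avg where
  "avg T K \<alpha>0 CT v F x =
     (if int_face T F then (\<Sum>E\<in>els T F. omg T K \<alpha>0 CT E F * v E x)
      else (\<Sum>E\<in>els T F. v E x))"

text \<open>Skew mean {phi}* = omega_2 phi_1 + omega_1 phi_2 (omega_2 = 1 - omega_1), componentwise for vectors.\<close>
definition avgstar_vec where
  "avgstar_vec T K \<alpha>0 CT b F x =
     (if int_face T F then (\<Sum>E\<in>els T F. (1 - omg T K \<alpha>0 CT E F) *\<^sub>R b E x)
      else (\<Sum>E\<in>els T F. b E x))"

definition kgrad :: "((real^'d) set \<Rightarrow> real^'d^'d) \<Rightarrow> ((real^'d) set \<Rightarrow> real^'d \<Rightarrow> real) \<Rightarrow> (real^'d) set \<Rightarrow> real^'d \<Rightarrow> real^'d" where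
  "kgrad K u E x = K E *v grad (u E) x"

definition a_hip where
  "a_hip T K \<alpha>0 CT (\<epsilon>::int) uu vv =
     (let u = fst uu; uh = snd uu; v = fst vv; vh = snd vv in
      (\<Sum>E\<in>T. vol_int E (\<lambda>x. kgrad K u E x \<bullet> grad (v E) x))
      + (\<Sum>E\<in>T. \<Sum>F\<in>elem_faces E. face_int F (\<lambda>x.
            (- kgrad K u E x + tau K \<alpha>0 CT E F *\<^sub>R ((u E x - uh F x) *\<^sub>R onormal E F))
            \<bullet> ((v E x - vh F x) *\<^sub>R onormal E F)))
      + of_int \<epsilon> * (\<Sum>E\<in>T. \<Sum>F\<in>elem_faces E. face_int F (\<lambda>x.
            (- kgrad K v E x) \<bullet> ((u E x - uh F x) *\<^sub>R onormal E F))))"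

definition rhs where
  "rhs T f v = (\<Sum>E\<in>T. vol_int E (\<lambda>x. f x * v E x))"

definition hip_solution where
  "hip_solution T K \<alpha>0 CT \<epsilon> k f uu \<longleftrightarrow> Vh T k (fst uu) \<and> Vhat T k (snd uu) \<and>
     (\<forall>v vh. Vh T k v \<and> Vhat T k vh \<longrightarrow> a_hip T K \<alpha>0 CT \<epsilon> uu (v, vh) = rhs T f v)"

definition a_c where
  "a_c T K \<alpha>0 CT u v =
     - (\<Sum>F\<in>faces T. face_int F (\<lambda>x. avgstar_vec T K \<alpha>0 CT (kgrad K u) F x \<bullet> jump T v F x))"

definition s_h where
  "s_h T K \<alpha>0 CT (\<epsilon>::int) u v =
     (\<Sum>F\<in>faces T. face_int F (\<lambda>x. rho0 T K \<alpha>0 CT F * (jump T u F x \<bullet> jump T v F x)))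
     - of_int \<epsilon> * (\<Sum>F\<in>{F\<in>faces T. int_face T F}. face_int F (\<lambda>x.
          rho1 T K \<alpha>0 CT F * njump T (kgrad K u) F x * njump T (kgrad K v) F x))"

definition a_dg where
  "a_dg T K \<alpha>0 CT (\<epsilon>::int) u v =
     (\<Sum>E\<in>T. vol_int E (\<lambda>x. kgrad K u E x \<bullet> grad (v E) x))
     + a_c T K \<alpha>0 CT u v + of_int \<epsilon> * a_c T K \<alpha>0 CT v u + s_h T K \<alpha>0 CT \<epsilon> u v"

definition dg_solution where
  "dg_solution T K \<alpha>0 CT \<epsilon> k f u \<longleftrightarrow> Vh T k u \<and>
     (\<forall>v. Vh T k v \<longrightarrow> a_dg T K \<alpha>0 CT \<epsilon> u v = rhs T f v)"

definition uhat_of where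
  "uhat_of T K \<alpha>0 CT u F x =
     (if int_face T F \<and> x \<in> F
      then avg T K \<alpha>0 CT u F x - rho1 T K \<alpha>0 CT F * njump T (kgrad K u) F x
      else 0)"

end

theory Submission
  imports Defs
begin

(* On a face F the H-IP face terms are affine in the face unknown uh. Writing
   ut = {u}_omega - rho1 [kappa grad u] (the trace uhat_of) and
   Q(v) = - sum_i tau_i v_i + eps sum_i kappa grad v_i . n_i, substituting n2 = - n1 and the
   tau-weighted means turns the H-IP face integrand into the UIP-DG face integrand plus
   (uh - ut) (Q(v) + (tau1 + tau2) vh); on boundary faces uh = vh = ut = 0. Hence
     a_hip ((u, uh), (v, vh)) = a_dg (u, v) + sum_F int_F (uh - ut) (Q(v) + (tau1 + tau2) vh).
   For uh = ut the coupling term vanishes, which gives (ii). Conversely, for an H-IP solution,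
   testing with (0, Q(v) / (tau1 + tau2)) shows that the coupling term with vh = 0 vanishes, so
   testing with (v, 0) gives the UIP-DG equation, which is (i). The geometric input is that an
   interior face is shared by exactly two simplices, whose outward normals are opposite. *)

definition vec_monomial :: "('d \<Rightarrow> nat) \<Rightarrow> real^'d \<Rightarrow> real" where
  "vec_monomial \<alpha> x = (\<Prod>i\<in>UNIV. (x $ i) ^ \<alpha> i)"

definition multi_indices :: "nat \<Rightarrow> ('d::finite \<Rightarrow> nat) set" where
  "multi_indices k = {\<alpha>. sum \<alpha> UNIV \<le> k}"

lemma finite_multi_indices: "finite (multi_indices k :: ('d::finite \<Rightarrow> nat) set)"
proof (rule finite_subset)
  have "\<alpha> i \<le> sum \<alpha> UNIV" for \<alpha> :: "'d \<Rightarrow> nat" and i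
    by (rule member_le_sum) auto
  then show "multi_indices k \<subseteq> PiE (UNIV::'d set) (\<lambda>_. {..k})"
    unfolding multi_indices_def PiE_UNIV_domain by (auto intro: order_trans)
qed (rule finite_PiE, auto)

lemma poly_fun_iff:
  "poly_fun k p \<longleftrightarrow> (\<exists>c. p = (\<lambda>x. \<Sum>\<alpha>\<in>multi_indices k. c \<alpha> * vec_monomial \<alpha> x))"
  unfolding poly_fun_def multi_indices_def vec_monomial_def by simp

lemma poly_fun_add: "poly_fun k p \<Longrightarrow> poly_fun k q \<Longrightarrow> poly_fun k (\<lambda>x. p x + q x)"
  unfolding poly_fun_iff
  by (elim exE, rule exI[of _ "\<lambda>\<alpha>. _ \<alpha> + _ \<alpha>"]) (simp add: sum.distrib distrib_right)

lemma poly_fun_cmult: "poly_fun k p \<Longrightarrow> poly_fun k (\<lambda>x. a * p x)"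
  unfolding poly_fun_iff
  by (elim exE, rule exI[of _ "\<lambda>\<alpha>. a * _ \<alpha>"]) (simp add: sum_distrib_left mult.assoc)

lemma poly_fun_zero: "poly_fun k (\<lambda>x. 0)"
  unfolding poly_fun_iff by (auto intro!: exI[of _ "\<lambda>\<alpha>. 0"])

lemma poly_fun_diff: "poly_fun k p \<Longrightarrow> poly_fun k q \<Longrightarrow> poly_fun k (\<lambda>x. p x - q x)"
  using poly_fun_add[of k p "\<lambda>x. (-1) * q x"] poly_fun_cmult[of k q "-1"] by simp

lemma poly_fun_divide: "poly_fun k p \<Longrightarrow> poly_fun k (\<lambda>x. p x / c)"
  using poly_fun_cmult[of k p "1 / c"] by simp

lemma poly_fun_sum: "(\<And>i. i \<in> I \<Longrightarrow> poly_fun k (p i)) \<Longrightarrow> poly_fun k (\<lambda>x. \<Sum>i\<in>I. p i x)"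
proof (induction I rule: infinite_finite_induct)
  case (infinite I)
  then show ?case by (simp add: poly_fun_zero)
qed (auto intro: poly_fun_zero poly_fun_add)

lemma poly_fun_vec_monomial:
  assumes "\<beta> \<in> multi_indices k" shows "poly_fun k (vec_monomial \<beta>)"
proof -
  have "multi_indices k \<inter> {\<alpha>. \<alpha> = \<beta>} = {\<beta>}" using assms by auto
  then show ?thesis
    unfolding poly_fun_iff
    by (intro exI[of _ "\<lambda>\<alpha>. of_bool (\<alpha> = \<beta>)"]) (simp add: finite_multi_indices)
qed

lemma continuous_on_poly_fun: "poly_fun k p \<Longrightarrow> continuous_on S p"
  unfolding poly_fun_iff vec_monomial_def by (elim exE, simp, intro continuous_intros)

lemma has_derivative_vec_monomial:
  "(vec_monomial \<alpha> has_derivative (\<lambda>h. \<Sum>i\<in>UNIV. (of_nat (\<alpha> i) * h $ i * (x $ i) ^ (\<alpha> i - 1)) *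
      (\<Prod>j\<in>UNIV - {i}. (x $ j) ^ \<alpha> j))) (at x)"
  unfolding vec_monomial_def[abs_def]
  by (intro has_derivative_prod has_derivative_power bounded_linear_imp_has_derivative bounded_linear_vec_nth)

lemma grad_vec_monomial: "grad (vec_monomial \<alpha>) x $ j = real (\<alpha> j) * vec_monomial (\<alpha>(j := \<alpha> j - 1)) x"
proof -
  have "grad (vec_monomial \<alpha>) x $ j = (\<Sum>i\<in>UNIV. (of_nat (\<alpha> i) * axis j 1 $ i * (x $ i) ^ (\<alpha> i - 1)) *
      (\<Prod>j\<in>UNIV - {i}. (x $ j) ^ \<alpha> j))"
    unfolding grad_def frechet_derivative_at[OF has_derivative_vec_monomial, symmetric] by simp
  also have "\<dots> = (\<Sum>i\<in>UNIV. if i = j then (of_nat (\<alpha> i) * (x $ i) ^ (\<alpha> i - 1)) *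
          (\<Prod>j\<in>UNIV - {i}. (x $ j) ^ \<alpha> j) else 0)"
    by (rule sum.cong) (auto simp: axis_def)
  also have "\<dots> = real (\<alpha> j) * ((x $ j) ^ (\<alpha> j - 1) * (\<Prod>i\<in>UNIV - {j}. (x $ i) ^ \<alpha> i))"
    by simp
  also have "\<dots> = real (\<alpha> j) * vec_monomial (\<alpha>(j := \<alpha> j - 1)) x"
    unfolding vec_monomial_def by (subst prod.remove[of _ j]) (auto intro!: prod.cong)
  finally show ?thesis .
qed

lemma grad_poly_sum:
  "grad (\<lambda>x. \<Sum>\<alpha>\<in>S. c \<alpha> * vec_monomial \<alpha> x) x $ j = (\<Sum>\<alpha>\<in>S. c \<alpha> * grad (vec_monomial \<alpha>) x $ j)"
proof -
  have "((\<lambda>x. \<Sum>\<alpha>\<in>S. c \<alpha> * vec_monomial \<alpha> x) has_derivative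
      (\<lambda>h. \<Sum>\<alpha>\<in>S. c \<alpha> * frechet_derivative (vec_monomial \<alpha>) (at x) h)) (at x)"
    unfolding frechet_derivative_at[OF has_derivative_vec_monomial, symmetric]
    by (intro has_derivative_sum has_derivative_mult_right has_derivative_vec_monomial)
  then show ?thesis
    unfolding grad_def by (simp add: frechet_derivative_at[symmetric])
qed

lemma poly_fun_grad_component:
  assumes "poly_fun k p" shows "poly_fun k (\<lambda>x. grad p x $ j)"
proof -
  obtain c where p: "p = (\<lambda>x. \<Sum>\<alpha>\<in>multi_indices k. c \<alpha> * vec_monomial \<alpha> x)"
    using assms unfolding poly_fun_iff by blast
  have lower: "\<alpha>(j := \<alpha> j - 1) \<in> multi_indices k" if "\<alpha> \<in> multi_indices k" for \<alpha>
  proof -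
    have "sum (\<alpha>(j := \<alpha> j - 1)) UNIV \<le> sum \<alpha> UNIV" by (rule sum_mono) auto
    then show ?thesis using that unfolding multi_indices_def by simp
  qed
  have grad_p: "(\<lambda>x. grad p x $ j)
      = (\<lambda>x. \<Sum>\<alpha>\<in>multi_indices k. (c \<alpha> * real (\<alpha> j)) * vec_monomial (\<alpha>(j := \<alpha> j - 1)) x)"
    unfolding p grad_poly_sum grad_vec_monomial by (simp add: mult.assoc)
  show ?thesis
    unfolding grad_p by (intro poly_fun_sum poly_fun_cmult poly_fun_vec_monomial lower)
qed

lemma continuous_on_grad_poly_fun: "poly_fun k p \<Longrightarrow> continuous_on S (grad p)"
  by (rule continuous_on_vec_lambda[where f = "\<lambda>i x. grad p x $ i", simplified])
     (intro continuous_on_poly_fun poly_fun_grad_component)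

lemma poly_fun_flux: "poly_fun k p \<Longrightarrow> poly_fun k (\<lambda>x. (M *v grad p x) \<bullet> n)"
proof -
  assume p: "poly_fun k p"
  have "(\<lambda>x. (M *v grad p x) \<bullet> n) = (\<lambda>x. \<Sum>i\<in>UNIV. \<Sum>j\<in>UNIV. (n $ i * M $ i $ j) * grad p x $ j)"
    by (simp add: inner_vec_def matrix_vector_mult_def sum_distrib_left sum_distrib_right mult_ac)
  then show ?thesis
    by (simp add: poly_fun_sum poly_fun_cmult poly_fun_grad_component p)
qed

lemma grad_const: "grad (\<lambda>x. c) x = 0"
  unfolding grad_def frechet_derivative_at[OF has_derivative_const, symmetric] by (simp add: vec_eq_iff)

section \<open>Facets of simplices and their outward normals\<close>

lemma simplex_facet_hyperplane:
  fixes E F :: "(real^'d) set"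
  assumes S: "int CARD('d) simplex E" and F: "F facet_of E"
  obtains C p n c where "finite C" "affine hull C = UNIV" "E = convex hull C"
    "p \<in> C" "F = convex hull (C - {p})" "norm n = 1" "affine hull F = {x. n \<bullet> x = c}"
    "E \<subseteq> {x. n \<bullet> x \<le> c}" "n \<bullet> p < c"
proof -
  obtain C where C: "finite C" "\<not> affine_dependent C" "int (card C) = int CARD('d) + 1"
    "E = convex hull C"
    using S unfolding simplex by blast
  then obtain p where p: "p \<in> C" "F = convex hull (C - {p})"
    using F facet_of_convex_hull_affine_independent_alt by blast
  have "aff_dim C = int (card C) - 1"
    using C(1,2) affine_independent_iff_card by blast
  then have full: "affine hull C = UNIV"
    using C(3) aff_dim_eq_full[of C] by simp
  have "\<not> affine_dependent (C - {p})"
    using C(2) affine_dependent_subset by blast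
  then have "aff_dim (C - {p}) = int (card (C - {p})) - 1"
    using affine_independent_iff_card by blast
  then have "aff_dim (C - {p}) = DIM(real^'d) - 1"
    using C(1,3) p(1) by simp
  then obtain a b where ab: "a \<noteq> 0" "affine hull (C - {p}) = {x. a \<bullet> x = b}"
    using aff_dim_eq_hyperplane by blast
  have "p \<notin> affine hull (C - {p})"
    using C(2) p(1) unfolding affine_dependent_def by blast
  then have "a \<bullet> p \<noteq> b" using ab by auto
  define s where "s = (if a \<bullet> p < b then 1 else - 1 :: real)"
  define n where "n = (s / norm a) *\<^sub>R a"
  define c where "c = s * b / norm a"
  have s: "s * s = 1" "s * (a \<bullet> p) < s * b"
    unfolding s_def using \<open>a \<bullet> p \<noteq> b\<close> by auto
  have n: "norm n = 1" unfolding n_def using ab(1) s(1) by (simp add: abs_if s_def)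
  have hyp: "affine hull (C - {p}) = {x. n \<bullet> x = c}"
    unfolding ab n_def c_def using ab(1) s(1) by (auto simp: field_simps s_def)
  have np: "n \<bullet> p < c" unfolding n_def c_def using ab(1) s(2) by (simp add: field_simps)
  have "C \<subseteq> {x. n \<bullet> x \<le> c}"
    using hyp np hull_inc[of _ "C - {p}"] by (force simp: less_imp_le)
  then have "E \<subseteq> {x. n \<bullet> x \<le> c}"
    unfolding C(4) by (rule hull_minimal) (rule convex_halfspace_le)
  moreover have "affine hull F = {x. n \<bullet> x = c}"
    unfolding p(2) affine_hull_convex_hull hyp ..
  ultimately show ?thesis
    using that C(1,4) full p n np by blast
qed

lemma parallel_if_constant_on_hyperplane:
  fixes m n :: "'a::real_inner"
  assumes n: "norm n = 1" and F: "affine hull F = {x. n \<bullet> x = c}"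
    and x0: "x0 \<in> F" and m: "\<forall>x\<in>F. m \<bullet> x = m \<bullet> x0"
  shows "m = (m \<bullet> n) *\<^sub>R n"
proof -
  define w where "w = m - (m \<bullet> n) *\<^sub>R n"
  have nn: "n \<bullet> n = 1" using n by (simp add: dot_square_norm)
  have nw: "n \<bullet> w = 0" unfolding w_def by (simp add: inner_diff_right nn inner_commute)
  have "affine hull F \<subseteq> {x. m \<bullet> x = m \<bullet> x0}"
    by (rule hull_minimal) (use m in \<open>auto simp: affine_hyperplane\<close>)
  moreover have "x0 + w \<in> affine hull F"
  proof -
    have "x0 \<in> affine hull F" using x0 by (rule hull_inc)
    then show ?thesis using F nw by (simp add: inner_add_right)
  qed
  ultimately have "m \<bullet> w = 0" by (auto simp: inner_add_right)
  moreover have "w \<bullet> w = m \<bullet> w - (m \<bullet> n) * (n \<bullet> w)"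
    unfolding w_def by (simp add: inner_diff_left)
  ultimately have "w \<bullet> w = 0" using nw by simp
  then show ?thesis unfolding w_def by simp
qed

lemma onormal_simplex_facet:
  fixes E F :: "(real^'d) set"
  assumes S: "int CARD('d) simplex E" and F: "F facet_of E"
  obtains C p c where "finite C" "affine hull C = UNIV" "E = convex hull C"
    "p \<in> C" "F = convex hull (C - {p})" "norm (onormal E F) = 1"
    "affine hull F = {x. onormal E F \<bullet> x = c}" "E \<subseteq> {x. onormal E F \<bullet> x \<le> c}"
    "onormal E F \<bullet> p < c"
proof -
  obtain C p n c where C: "finite C" "affine hull C = UNIV" "E = convex hull C"
    "p \<in> C" "F = convex hull (C - {p})" and n: "norm n = 1"
    and hyp: "affine hull F = {x. n \<bullet> x = c}" and below: "E \<subseteq> {x. n \<bullet> x \<le> c}"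
    and np: "n \<bullet> p < c"
    by (rule simplex_facet_hyperplane[OF S F])
  let ?m = "onormal E F"
  have FE: "F \<subseteq> E" using F by (rule facet_of_imp_subset)
  have "F \<noteq> {}" using F by (simp add: facet_of_def)
  then obtain x0 where x0: "x0 \<in> F" by blast
  have onF: "n \<bullet> x = c" if "x \<in> F" for x
    using hyp hull_inc[OF that] by auto
  have "norm n = 1 \<and> (\<forall>x\<in>F. \<forall>y\<in>E. n \<bullet> y \<le> n \<bullet> x)"
    using n below onF by auto
  then have "norm ?m = 1 \<and> (\<forall>x\<in>F. \<forall>y\<in>E. ?m \<bullet> y \<le> ?m \<bullet> x)"
    unfolding onormal_def by (rule someI)
  then have m: "norm ?m = 1" "\<forall>x\<in>F. \<forall>y\<in>E. ?m \<bullet> y \<le> ?m \<bullet> x" by auto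
  have "\<forall>x\<in>F. ?m \<bullet> x = ?m \<bullet> x0"
    using m(2) x0 FE by (meson order_antisym subsetD)
  then have par: "?m = (?m \<bullet> n) *\<^sub>R n"
    by (rule parallel_if_constant_on_hyperplane[OF n hyp x0])
  then have "\<bar>?m \<bullet> n\<bar> = 1" using m(1) n by (metis norm_scaleR mult.right_neutral)
  moreover have "?m \<bullet> n \<noteq> -1"
  proof
    assume "?m \<bullet> n = -1"
    then have "?m = - n" using par by simp
    moreover have "p \<in> E" unfolding C(3) using C(4) by (rule hull_inc)
    ultimately have "- n \<bullet> p \<le> - n \<bullet> x0" using m(2) x0 by metis
    then show False using np onF[OF x0] by simp
  qed
  ultimately have "?m = n" using par by (auto simp: abs_if split: if_splits)
  then show ?thesis using that C n hyp below np by blast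
qed

lemma norm_onormal:
  fixes E F :: "(real^'d) set"
  assumes "int CARD('d) simplex E" "F facet_of E"
  shows "norm (onormal E F) = 1"
  by (rule onormal_simplex_facet[OF assms]) blast

lemma facet_centroid_segment_in_convex_hull:
  fixes C :: "'a::real_inner set"
  assumes C: "finite C" "affine hull C = UNIV" "p \<in> C" "C - {p} \<noteq> {}"
    and nV: "\<forall>v\<in>C - {p}. n \<bullet> v = c" and np: "n \<bullet> p < c" and nq: "n \<bullet> q < c"
  defines "g \<equiv> (1 / real (card (C - {p}))) *\<^sub>R (\<Sum>v\<in>C - {p}. v)"
  shows "\<exists>t>0. t \<le> 1 \<and> (1 - t) *\<^sub>R g + t *\<^sub>R q \<in> convex hull C"
proof -
  obtain l where l: "sum l C = 1" "(\<Sum>v\<in>C. l v *\<^sub>R v) = q"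
  proof -
    have "q \<in> affine hull C" using C(2) by simp
    then show ?thesis using that unfolding affine_hull_finite[OF C(1)] by blast
  qed
  define V where "V = C - {p}"
  define N where "N = real (card V)"
  have N: "N > 0" unfolding N_def V_def using C(1,4) by (metis card_gt_0_iff finite_Diff of_nat_0_less_iff)
  define M where "M = (\<Sum>v\<in>C. \<bar>l v\<bar>)"
  have M: "M \<ge> 0" "\<And>v. v \<in> C \<Longrightarrow> \<bar>l v\<bar> \<le> M"
    unfolding M_def using C(1) by (auto intro: sum_nonneg member_le_sum)
  have sumC: "(\<Sum>v\<in>C. f v) = f p + (\<Sum>v\<in>V. f v)" for f :: "'a \<Rightarrow> 'b::comm_monoid_add"
    unfolding V_def using C by (simp add: sum.remove)
  have "n \<bullet> q = (\<Sum>v\<in>C. l v * (n \<bullet> v))"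
    unfolding l(2)[symmetric] by (simp add: inner_sum_right)
  also have "\<dots> = l p * (n \<bullet> p) + (\<Sum>v\<in>V. l v * c)"
    unfolding sumC using nV V_def by simp
  also have "(\<Sum>v\<in>V. l v * c) = (1 - l p) * c"
    using l(1) unfolding sumC by (simp add: sum_distrib_right[symmetric])
  finally have "c - n \<bullet> q = l p * (c - n \<bullet> p)" by (simp add: algebra_simps)
  then have lp: "l p > 0" using np nq by (smt (verit) mult_nonpos_nonneg)
  \<comment> \<open>t is small enough that mixing l into the uniform weights of the facet keeps them nonnegative\<close>
  define t where "t = 1 / (1 + N * M)"
  have NM: "N * M \<ge> 0" using N M(1) by simp
  have t: "t > 0" "t \<le> 1" "1 - t = t * (N * M)"
    unfolding t_def using NM by (auto simp: field_simps)
  then have t_uniform: "(1 - t) / N = t * M" using N by simp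
  define \<mu> where "\<mu> v = (1 - t) * (if v = p then 0 else 1 / N) + t * l v" for v
  have \<mu>_nonneg: "0 \<le> \<mu> v" if "v \<in> C" for v
  proof (cases "v = p")
    case False
    have "t * (- l v) \<le> t * M" using M(2)[OF that] t(1) by (intro mult_left_mono) auto
    then show ?thesis unfolding \<mu>_def using False t_uniform by (simp add: algebra_simps)
  qed (use t(1) lp in \<open>simp add: \<mu>_def\<close>)
  have "(\<Sum>v\<in>V. if v = p then 0 else 1 / N) = (\<Sum>v\<in>V. 1 / N)"
    by (rule sum.cong) (auto simp: V_def)
  then have uniform: "(\<Sum>v\<in>V. if v = p then 0 else 1 / N) = 1"
    using N by (simp add: N_def)
  have "sum \<mu> C = 1"
    unfolding \<mu>_def sum.distrib sum_distrib_left[symmetric] l(1) unfolding sumC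
    using uniform by simp
  moreover have "(\<Sum>v\<in>C. \<mu> v *\<^sub>R v) = (1 - t) *\<^sub>R g + t *\<^sub>R q"
    unfolding \<mu>_def l(2)[symmetric] g_def
    by (simp add: scaleR_add_left scaleR_add_right sum.distrib scaleR_sum_right sumC V_def N_def)
  ultimately have "(1 - t) *\<^sub>R g + t *\<^sub>R q \<in> convex hull C"
    unfolding convex_hull_finite[OF C(1)] using \<mu>_nonneg by (intro CollectI exI[of _ \<mu>]) blast
  then show ?thesis using t by blast
qed

lemma inter_eq_common_facet:
  fixes E1 E2 F :: "(real^'d) set"
  assumes S1: "int CARD('d) simplex E1" and S2: "int CARD('d) simplex E2" and ne: "E1 \<noteq> E2"
    and G1: "(E1 \<inter> E2) face_of E1" and G2: "(E1 \<inter> E2) face_of E2"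
    and F1: "F facet_of E1" and F2: "F facet_of E2"
  shows "E1 \<inter> E2 = F"
proof (rule ccontr)
  assume "E1 \<inter> E2 \<noteq> F"
  have d1: "aff_dim E1 = int CARD('d)" and d2: "aff_dim E2 = int CARD('d)"
    using S1 S2 by (simp_all add: aff_dim_simplex)
  have "F \<subseteq> E1 \<inter> E2" using F1 F2 facet_of_imp_subset by blast
  then have "F face_of E1 \<inter> E2" using face_of_subset[OF facet_of_imp_face_of[OF F1]] by blast
  then have "aff_dim F < aff_dim (E1 \<inter> E2)"
    using face_of_aff_dim_lt[OF face_of_imp_convex[OF G1]] \<open>E1 \<inter> E2 \<noteq> F\<close> by simp
  moreover have "E1 \<inter> E2 \<noteq> E1"
  proof
    assume "E1 \<inter> E2 = E1"
    then have "aff_dim E1 < aff_dim E2"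
      using G2 face_of_aff_dim_lt[OF convex_simplex[OF S2]] ne by auto
    then show False using d1 d2 by simp
  qed
  then have "aff_dim (E1 \<inter> E2) < int CARD('d)"
    using face_of_aff_dim_lt[OF convex_simplex[OF S1] G1] d1 by simp
  moreover have "aff_dim F = int CARD('d) - 1" using F1 d1 by (simp add: facet_of_def)
  ultimately show False by simp
qed

lemma onormal_common_facet:
  fixes E1 E2 F :: "(real^'d) set"
  assumes S1: "int CARD('d) simplex E1" and S2: "int CARD('d) simplex E2" and ne: "E1 \<noteq> E2"
    and G1: "(E1 \<inter> E2) face_of E1" and G2: "(E1 \<inter> E2) face_of E2"
    and F1: "F facet_of E1" and F2: "F facet_of E2"
  shows "onormal E2 F = - onormal E1 F"
proof -
  have E12: "E1 \<inter> E2 = F" by (rule inter_eq_common_facet[OF assms])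
  obtain C1 p1 c1 where C1: "finite C1" "affine hull C1 = UNIV" "E1 = convex hull C1"
    "p1 \<in> C1" "F = convex hull (C1 - {p1})" and n: "norm (onormal E1 F) = 1"
    and hyp1: "affine hull F = {x. onormal E1 F \<bullet> x = c1}" and np1: "onormal E1 F \<bullet> p1 < c1"
    by (rule onormal_simplex_facet[OF S1 F1])
  obtain C2 p2 c2 where C2: "E2 = convex hull C2" "p2 \<in> C2" and m: "norm (onormal E2 F) = 1"
    and hyp2: "affine hull F = {x. onormal E2 F \<bullet> x = c2}" and np2: "onormal E2 F \<bullet> p2 < c2"
    by (rule onormal_simplex_facet[OF S2 F2])
  let ?n = "onormal E1 F" and ?m = "onormal E2 F"
  have Fne: "F \<noteq> {}" using F1 by (simp add: facet_of_def)
  then obtain x0 where x0: "x0 \<in> F" by blast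
  have onF: "?n \<bullet> x = c1" "?m \<bullet> x = c2" if "x \<in> F" for x
    using hyp1 hyp2 hull_inc[OF that] by auto
  have par: "?m = (?m \<bullet> ?n) *\<^sub>R ?n"
    by (rule parallel_if_constant_on_hyperplane[OF n hyp1 x0]) (simp add: onF x0)
  then have "\<bar>?m \<bullet> ?n\<bar> = 1" using m n by (metis norm_scaleR mult.right_neutral)
  moreover have "?m \<noteq> ?n"
  proof
    \<comment> \<open>if both elements lay on the same side of F, points just off the centroid of F
      towards the far vertex of E2 would lie in E1 \<inter> E2 = F\<close>
    assume mn: "?m = ?n"
    have "c2 = c1" using onF x0 mn by metis
    then have np2': "?n \<bullet> p2 < c1" using np2 mn by simp
    define g where "g = (1 / real (card (C1 - {p1}))) *\<^sub>R (\<Sum>v\<in>C1 - {p1}. v)"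
    have V: "C1 - {p1} \<noteq> {}" using C1(5) Fne by auto
    have nV: "\<forall>v\<in>C1 - {p1}. ?n \<bullet> v = c1"
      using onF C1(5) hull_inc[of _ "C1 - {p1}"] by blast
    obtain t where t: "t > 0" "t \<le> 1" "(1 - t) *\<^sub>R g + t *\<^sub>R p2 \<in> E1"
      using facet_centroid_segment_in_convex_hull[OF C1(1,2,4) V nV np1 np2'] C1(3)
      unfolding g_def by blast
    have "g \<in> convex hull (C1 - {p1})"
      unfolding convex_hull_finite[OF finite_Diff[OF C1(1)]] g_def scaleR_sum_right
      using V C1(1) by (intro CollectI exI[of _ "\<lambda>_. 1 / real (card (C1 - {p1}))"]) auto
    then have gF: "g \<in> F" using C1(5) by simp
    have "p2 \<in> E2" unfolding C2(1) using C2(2) by (rule hull_inc)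
    then have "(1 - t) *\<^sub>R g + t *\<^sub>R p2 \<in> E2"
      using convexD[OF convex_simplex[OF S2]] gF facet_of_imp_subset[OF F2] t(1,2) by auto
    then have "(1 - t) *\<^sub>R g + t *\<^sub>R p2 \<in> F" using t(3) E12 by blast
    then have "?n \<bullet> ((1 - t) *\<^sub>R g + t *\<^sub>R p2) = c1" by (rule onF(1))
    then have "(1 - t) * c1 + t * (?n \<bullet> p2) = c1"
      using onF(1)[OF gF] by (simp add: inner_add_right)
    then have "t * (?n \<bullet> p2 - c1) = 0" by (simp add: algebra_simps)
    then show False using t(1) np2' by simp
  qed
  ultimately show ?thesis using par by (auto simp: abs_if split: if_splits)
qed

section \<open>Integrals over flat faces\<close>

definition flat_face :: "(real^'d) set \<Rightarrow> bool" where
  "flat_face F \<longleftrightarrow> F \<noteq> {} \<and> compact F \<and> (\<exists>n. norm n = 1 \<and> (\<forall>x\<in>F. \<forall>y\<in>F. n \<bullet> (x - y) = 0))"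

definition face_prism :: "(real^'d) set \<Rightarrow> (real^'d) set" where
  "face_prism F = {y + t *\<^sub>R fnormal F | y t. y \<in> F \<and> t \<in> {0..1}}"

definition face_proj :: "(real^'d) set \<Rightarrow> real^'d \<Rightarrow> real^'d" where
  "face_proj F x = x - ((x - (SOME c. c \<in> F)) \<bullet> fnormal F) *\<^sub>R fnormal F"

lemma face_int_prism: "face_int F g = (LINT x:face_prism F|lebesgue. g (face_proj F x))"
  unfolding face_int_def face_prism_def face_proj_def Let_def ..

lemma fnormal_flat_face:
  assumes "flat_face F"
  shows "norm (fnormal F) = 1" "\<forall>x\<in>F. \<forall>y\<in>F. fnormal F \<bullet> (x - y) = 0"
proof -
  have "\<exists>n. norm n = 1 \<and> (\<forall>x\<in>F. \<forall>y\<in>F. n \<bullet> (x - y) = 0)"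
    using assms unfolding flat_face_def by blast
  then have "norm (fnormal F) = 1 \<and> (\<forall>x\<in>F. \<forall>y\<in>F. fnormal F \<bullet> (x - y) = 0)"
    unfolding fnormal_def by (rule someI_ex)
  then show "norm (fnormal F) = 1" "\<forall>x\<in>F. \<forall>y\<in>F. fnormal F \<bullet> (x - y) = 0" by auto
qed

lemma face_proj_face_prism:
  assumes F: "flat_face F" and x: "x \<in> face_prism F"
  shows "face_proj F x \<in> F"
proof -
  let ?n = "fnormal F" and ?c = "SOME c. c \<in> F"
  have c: "?c \<in> F" using F unfolding flat_face_def by (simp add: some_in_eq)
  obtain y t where xy: "x = y + t *\<^sub>R ?n" and y: "y \<in> F"
    using x unfolding face_prism_def by blast
  have "?n \<bullet> ?n = 1" using fnormal_flat_face(1)[OF F] by (simp add: dot_square_norm)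
  moreover have "(y - ?c) \<bullet> ?n = 0"
    using fnormal_flat_face(2)[OF F] y c by (simp add: inner_commute)
  ultimately have "(x - ?c) \<bullet> ?n = t"
    unfolding xy by (simp add: algebra_simps)
  then show ?thesis unfolding face_proj_def xy using y by simp
qed

lemma face_prism_eq_image: "face_prism F = (\<lambda>p. fst p + snd p *\<^sub>R fnormal F) ` (F \<times> {0..1})"
  unfolding face_prism_def by (fastforce simp: image_iff)

lemma compact_face_prism:
  assumes "flat_face F" shows "compact (face_prism F)"
  unfolding face_prism_eq_image
proof (rule compact_continuous_image)
  show "continuous_on (F \<times> {0..1}) (\<lambda>p. fst p + snd p *\<^sub>R fnormal F)"
    by (intro continuous_on_add continuous_on_scaleR continuous_on_fst continuous_on_snd
        continuous_on_id continuous_on_const)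
  show "compact (F \<times> {0..(1::real)})"
    using assms unfolding flat_face_def by (simp add: compact_Times)
qed

lemma face_int_cong:
  assumes "flat_face F" "\<And>x. x \<in> F \<Longrightarrow> g x = h x"
  shows "face_int F g = face_int F h"
  unfolding face_int_prism
proof (rule set_lebesgue_integral_cong)
  show "face_prism F \<in> sets lebesgue"
    using compact_face_prism[OF assms(1)] by (simp add: borel_compact)
  show "\<forall>x. x \<in> face_prism F \<longrightarrow> g (face_proj F x) = h (face_proj F x)"
    using face_proj_face_prism[OF assms(1)] assms(2) by blast
qed

lemma continuous_on_face_proj: "continuous_on S (face_proj F)"
  unfolding face_proj_def[abs_def] by (intro continuous_intros)

lemma face_integrable:
  fixes g :: "real^'d \<Rightarrow> real"
  assumes F: "flat_face F" and g: "continuous_on F g"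
  shows "set_integrable lebesgue (face_prism F) (\<lambda>x. g (face_proj F x))"
proof -
  have K: "compact (face_prism F)" by (rule compact_face_prism[OF F])
  have c: "continuous_on (face_prism F) (\<lambda>x. g (face_proj F x))"
    using face_proj_face_prism[OF F] by (intro continuous_on_compose2[OF g continuous_on_face_proj]) auto
  have "(\<lambda>x. indicator (face_prism F) x *\<^sub>R g (face_proj F x)) \<in> borel_measurable lborel"
    using borel_measurable_continuous_on_indicator[OF borel_compact[OF K] c] by simp
  then show ?thesis
    unfolding set_integrable_def
    by (rule integrable_completion[THEN iffD2]) (rule borel_integrable_compact[OF K c])
qed

lemma face_int_add:
  assumes "flat_face F" "continuous_on F g" "continuous_on F h"
  shows "face_int F (\<lambda>x. g x + h x) = face_int F g + face_int F h"
  unfolding face_int_prism by (rule set_integral_add) (intro face_integrable assms)+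

lemma face_int_cmult: "face_int F (\<lambda>x. a * g x) = a * face_int F g"
  unfolding face_int_prism by simp

lemma face_int_minus: "face_int F (\<lambda>x. - g x) = - face_int F g"
  using face_int_cmult[of F "-1" g] by simp

lemma face_int_diff:
  assumes "flat_face F" "continuous_on F g" "continuous_on F h"
  shows "face_int F (\<lambda>x. g x - h x) = face_int F g - face_int F h"
  unfolding face_int_prism by (rule set_integral_diff) (intro face_integrable assms)+

lemma face_int_zero: "face_int F (\<lambda>x. 0) = 0"
  unfolding face_int_prism by simp

lemma face_int_sum:
  assumes F: "flat_face F" and g: "\<And>i. i \<in> I \<Longrightarrow> continuous_on F (g i)"
  shows "face_int F (\<lambda>x. \<Sum>i\<in>I. g i x) = (\<Sum>i\<in>I. face_int F (g i))"
  using g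
proof (induction I rule: infinite_finite_induct)
  case (insert i I)
  have "face_int F (\<lambda>x. \<Sum>i\<in>insert i I. g i x) = face_int F (\<lambda>x. g i x + (\<Sum>i\<in>I. g i x))"
    using insert.hyps by simp
  also have "\<dots> = face_int F (g i) + face_int F (\<lambda>x. \<Sum>i\<in>I. g i x)"
    using insert.prems by (intro face_int_add[OF F] continuous_on_sum) auto
  finally show ?case using insert by simp
qed (simp_all add: face_int_prism)

lemma flat_face_facet:
  fixes E F :: "(real^'d) set"
  assumes "int CARD('d) simplex E" "F facet_of E"
  shows "flat_face F"
proof -
  obtain C p c where C: "finite C" "F = convex hull (C - {p})" and n: "norm (onormal E F) = 1"
    and hyp: "affine hull F = {x. onormal E F \<bullet> x = c}"
    by (rule onormal_simplex_facet[OF assms])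
  have "onormal E F \<bullet> x = c" if "x \<in> F" for x
    using hyp hull_inc[OF that] by auto
  then have "\<forall>x\<in>F. \<forall>y\<in>F. onormal E F \<bullet> (x - y) = 0" by (simp add: inner_diff_right)
  moreover have "compact F" unfolding C(2) using C(1) by (simp add: finite_imp_compact_convex_hull)
  moreover have "F \<noteq> {}" using assms(2) by (simp add: facet_of_def)
  ultimately show ?thesis unfolding flat_face_def using n by blast
qed

lemma mesh_simplex:
  "conforming_simplicial_mesh T \<Omega> \<Longrightarrow> E \<in> T \<Longrightarrow> int CARD('d) simplex (E :: (real^'d) set)"
  unfolding conforming_simplicial_mesh_def by auto

lemma finite_mesh: "conforming_simplicial_mesh T \<Omega> \<Longrightarrow> finite T"
  unfolding conforming_simplicial_mesh_def by blast

lemma flat_face_mesh_face: "conforming_simplicial_mesh T \<Omega> \<Longrightarrow> F \<in> faces T \<Longrightarrow> flat_face F"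
  unfolding faces_def by (auto intro: flat_face_facet mesh_simplex)

lemma finite_elem_faces: "int CARD('d) simplex (E :: (real^'d) set) \<Longrightarrow> finite (elem_faces E)"
  unfolding elem_faces_def facet_of_def
  by (rule finite_subset[OF _ finite_polytope_faces[OF simplex_imp_polytope]]) auto

lemma finite_faces: "conforming_simplicial_mesh T \<Omega> \<Longrightarrow> finite (faces (T :: (real^'d) set set))"
proof -
  assume T: "conforming_simplicial_mesh T \<Omega>"
  have "faces T = (\<Union>E\<in>T. elem_faces E)" unfolding faces_def elem_faces_def by auto
  then show ?thesis
    using finite_mesh[OF T] finite_elem_faces[OF mesh_simplex[OF T]] by simp
qed

lemma sum_elem_faces_swap:
  assumes T: "conforming_simplicial_mesh T \<Omega>"
  shows "(\<Sum>E\<in>T. \<Sum>F\<in>elem_faces E. G E F) = (\<Sum>F\<in>faces (T :: (real^'d) set set). \<Sum>E\<in>els T F. G E F)"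
proof -
  have "elem_faces E = {F\<in>faces T. F facet_of E}" if "E \<in> T" for E
    using that unfolding elem_faces_def faces_def by blast
  then have "(\<Sum>E\<in>T. \<Sum>F\<in>elem_faces E. G E F) = (\<Sum>E\<in>T. \<Sum>F\<in>{F\<in>faces T. F facet_of E}. G E F)"
    by simp
  also have "\<dots> = (\<Sum>F\<in>faces T. \<Sum>E\<in>{E\<in>T. F facet_of E}. G E F)"
    by (rule sum.swap_restrict[OF finite_mesh[OF T] finite_faces[OF T]])
  finally show ?thesis unfolding els_def .
qed

lemma els_int_face:
  fixes T :: "(real^'d) set set"
  assumes T: "conforming_simplicial_mesh T \<Omega>" and F: "int_face T F"
  obtains E1 E2 where "E1 \<noteq> E2" "els T F = {E1, E2}" "E1 \<in> T" "E2 \<in> T" "F facet_of E1"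
    "F facet_of E2" "onormal E2 F = - onormal E1 F"
proof -
  have opp: "onormal B F = - onormal A F"
    if "A \<in> T" "B \<in> T" "A \<noteq> B" "F facet_of A" "F facet_of B" for A B
    using T that by (intro onormal_common_facet mesh_simplex)
      (auto simp: conforming_simplicial_mesh_def)
  obtain E1 E2 where E: "E1 \<in> T" "E2 \<in> T" "E1 \<noteq> E2" "F facet_of E1" "F facet_of E2"
    using F unfolding int_face_def by blast
  \<comment> \<open>a third element would need a normal opposite to both of the others\<close>
  have "E3 \<in> {E1, E2}" if "E3 \<in> els T F" for E3
  proof (rule ccontr)
    assume "E3 \<notin> {E1, E2}"
    moreover have E3: "E3 \<in> T" "F facet_of E3" using that unfolding els_def by auto
    ultimately have "onormal E3 F = - onormal E1 F" "onormal E3 F = - onormal E2 F"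
      using opp[OF E(1) E3(1) _ E(4) E3(2)] opp[OF E(2) E3(1) _ E(5) E3(2)] by auto
    then have "onormal E1 F = - onormal E1 F" using opp[OF E] by simp
    then have "onormal E1 F = 0" by (simp add: vec_eq_iff)
    then show False using norm_onormal[OF mesh_simplex[OF T E(1)] E(4)] by simp
  qed
  then have "els T F = {E1, E2}" using E unfolding els_def by blast
  then show ?thesis using that E opp[OF E] by blast
qed

lemma els_bdry_face:
  assumes "F \<in> faces T" "\<not> int_face T F"
  obtains E where "els T F = {E}" "E \<in> T" "F facet_of E"
proof -
  obtain E where "E \<in> T" "F facet_of E" using assms(1) unfolding faces_def by blast
  moreover then have "els T F = {E}" using assms unfolding els_def int_face_def by blast
  ultimately show ?thesis using that by blast
qed

lemma coercive_on_elements: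
  fixes T :: "(real^'d) set set"
  assumes \<Omega>: "open \<Omega>" and T: "conforming_simplicial_mesh T \<Omega>"
    and pc: "\<forall>E\<in>T. \<forall>x\<in>interior E. \<kappa> x = K E"
    and ae: "AE x in lebesgue. x \<in> \<Omega> \<longrightarrow> (\<forall>\<xi>. \<kappa>min * (\<xi> \<bullet> \<xi>) \<le> \<xi> \<bullet> (\<kappa> x *v \<xi>))"
    and E: "E \<in> T"
  shows "\<kappa>min * (\<xi> \<bullet> \<xi>) \<le> \<xi> \<bullet> (K E *v \<xi>)"
proof -
  have S: "int CARD('d) simplex E" by (rule mesh_simplex[OF T E])
  then have "affine hull E = UNIV"
    using aff_dim_eq_full aff_dim_simplex by (metis DIM_cart DIM_real mult_1_right)
  moreover have "E \<noteq> {}" using S by (auto simp: simplex)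
  ultimately have "interior E \<noteq> {}"
    using rel_interior_eq_empty[OF convex_simplex[OF S]] rel_interior_interior by metis
  moreover have "E \<subseteq> closure \<Omega>"
    using T E Union_upper[OF E] unfolding conforming_simplicial_mesh_def by simp
  ultimately have U: "interior E \<inter> \<Omega> \<noteq> {}"
    using interior_subset open_Int_closure_eq_empty[of "interior E" \<Omega>] by blast
  \<comment> \<open>a nonempty open set is not null, so the a.e. bound holds at some point of it\<close>
  have "\<exists>x\<in>interior E \<inter> \<Omega>. \<forall>\<xi>. \<kappa>min * (\<xi> \<bullet> \<xi>) \<le> \<xi> \<bullet> (\<kappa> x *v \<xi>)"
  proof (rule ccontr)
    assume "\<not> ?thesis"
    then have "AE x in lebesgue. x \<notin> interior E \<inter> \<Omega>"
      by (intro eventually_mono[OF ae]) auto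
    then have "interior E \<inter> \<Omega> \<in> null_sets lebesgue"
      using \<Omega> by (subst AE_iff_null_sets) auto
    then show False
      using open_not_negligible[OF _ U] \<Omega> negligible_iff_null_sets by blast
  qed
  then show ?thesis using pc E by auto
qed

lemma diameter_simplex_pos:
  assumes S: "int CARD('d) simplex (E :: (real^'d) set)"
  shows "diameter E > 0"
proof -
  obtain C where C: "finite C" "int (card C) = int CARD('d) + 1" "E = convex hull C"
    using S unfolding simplex by blast
  then have "card C \<ge> 2" using zero_less_card_finite[where 'a='d] by linarith
  then obtain a b where ab: "a \<in> C" "b \<in> C" "a \<noteq> b"
    using C(1) by (metis card_le_Suc0_iff_eq not_less_eq_eq numeral_2_eq_2)
  have "dist a b \<le> diameter E"
    using ab C(3) compact_simplex[OF S]
    by (intro diameter_bounded_bound) (auto simp: hull_inc compact_imp_bounded)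
  then show ?thesis using dist_pos_lt[OF ab(3)] by linarith
qed

lemma tau_pos:
  fixes E F :: "(real^'d) set"
  assumes "int CARD('d) simplex E" "F facet_of E"
    and K: "\<And>\<xi>. \<kappa>min * (\<xi> \<bullet> \<xi>) \<le> \<xi> \<bullet> (K E *v \<xi>)"
    and "\<kappa>min > 0" "\<alpha>0 > 0" "CT \<noteq> 0"
  shows "tau K \<alpha>0 CT E F > 0"
proof -
  have "\<kappa>min \<le> kEF K E F"
    using norm_onormal[OF assms(1,2)]
      K[of "onormal E F"] unfolding kEF_def by (simp add: dot_square_norm)
  then show ?thesis
    unfolding tau_def using diameter_simplex_pos[OF assms(1)] assms(4-6) by simp
qed

lemma tau_pos_on_mesh:
  fixes T :: "(real^'d) set set"
  assumes "open \<Omega>" and T: "conforming_simplicial_mesh T \<Omega>"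
    and "\<forall>E\<in>T. \<forall>x\<in>interior E. \<kappa> x = K E"
    and "AE x in lebesgue. x \<in> \<Omega> \<longrightarrow> (\<forall>\<xi>. \<kappa>min * (\<xi> \<bullet> \<xi>) \<le> \<xi> \<bullet> (\<kappa> x *v \<xi>))"
    and "\<kappa>min > 0" "\<alpha>0 > 0" "CT \<noteq> 0" and E: "E \<in> T" "F facet_of E"
  shows "tau K \<alpha>0 CT E F > 0"
  using assms(1-7)
  by (intro tau_pos[OF mesh_simplex[OF T E(1)] E(2)] coercive_on_elements[OF _ T _ _ E(1)])

lemma poly_fun_Vh: "Vh T k u \<Longrightarrow> poly_fun k (u E)"
  unfolding Vh_def by (cases "E \<in> T") (auto intro: poly_fun_zero)

lemma Vh_zero: "Vh T k (\<lambda>E x. 0)"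
  unfolding Vh_def using poly_fun_zero by blast

lemma Vhat_zero: "Vhat T k (\<lambda>F x. 0)"
  unfolding Vhat_def using poly_fun_zero by blast

lemma Vhat_bdry_face: "Vhat T k w \<Longrightarrow> \<not> int_face T F \<Longrightarrow> w F x = 0"
  unfolding Vhat_def bdry_face_def by metis

lemma continuous_on_Vhat: "Vhat T k w \<Longrightarrow> F \<in> faces T \<Longrightarrow> continuous_on F (w F)"
  unfolding Vhat_def using continuous_on_poly_fun continuous_on_cong by metis

lemma Vhat_int_face_polys:
  assumes "\<And>F. int_face T F \<Longrightarrow> poly_fun k (p F)"
  shows "Vhat T k (\<lambda>F x. if int_face T F \<and> x \<in> F then p F x else 0)"
  unfolding Vhat_def bdry_face_def
proof (intro conjI allI ballI impI)
  fix F assume "F \<in> faces T"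
  show "\<exists>q. poly_fun k q \<and> (\<forall>x\<in>F. (if int_face T F \<and> x \<in> F then p F x else 0) = q x)"
  proof (cases "int_face T F")
    case True
    then show ?thesis using assms by auto
  next
    case False
    then show ?thesis using poly_fun_zero by auto
  qed
qed (auto simp: int_face_def fun_eq_iff)

lemma kgrad_zero: "kgrad K (\<lambda>E x. 0) = (\<lambda>E x. 0)"
  unfolding kgrad_def grad_const by simp

lemma continuous_on_kgrad: "poly_fun k (u E) \<Longrightarrow> continuous_on S (kgrad K u E)"
  unfolding kgrad_def[abs_def]
  by (intro continuous_on_compose2[OF matrix_vector_mult_linear_continuous_on continuous_on_grad_poly_fun]) auto

lemma continuous_on_avgstar_vec:
  fixes b :: "(real^'d) set \<Rightarrow> real^'d \<Rightarrow> real^'d"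
  assumes "\<And>E. continuous_on S (b E)"
  shows "continuous_on S (avgstar_vec T K \<alpha>0 CT b F)"
  unfolding avgstar_vec_def[abs_def]
  by (cases "int_face T F")
    (simp_all, (intro continuous_on_sum continuous_on_scaleR continuous_on_const assms)+)

lemma avgstar_vec_zero: "avgstar_vec T K \<alpha>0 CT (\<lambda>E x. 0 :: real^'d) F x = 0"
  unfolding avgstar_vec_def by simp

lemma Vhat_uhat_of:
  assumes u: "Vh T k u" shows "Vhat T k (uhat_of T K \<alpha>0 CT u)"
proof -
  have "poly_fun k (\<lambda>x. avg T K \<alpha>0 CT u F x - rho1 T K \<alpha>0 CT F * njump T (kgrad K u) F x)"
    if "int_face T F" for F
    unfolding avg_def njump_def kgrad_def using that
    by (simp add: poly_fun_diff poly_fun_cmult poly_fun_sum poly_fun_flux poly_fun_Vh[OF u])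
  then show ?thesis
    unfolding uhat_of_def[abs_def] by (rule Vhat_int_face_polys)
qed

section \<open>The two bilinear forms face by face\<close>

definition hip_face_integrand where
  "hip_face_integrand T K \<alpha>0 CT (\<epsilon>::int) u uh v vh F x =
     (\<Sum>E\<in>els T F. (- kgrad K u E x + tau K \<alpha>0 CT E F *\<^sub>R ((u E x - uh F x) *\<^sub>R onormal E F))
            \<bullet> ((v E x - vh F x) *\<^sub>R onormal E F))
     + of_int \<epsilon> * (\<Sum>E\<in>els T F. (- kgrad K v E x) \<bullet> ((u E x - uh F x) *\<^sub>R onormal E F))"

definition dg_face_integrand where
  "dg_face_integrand T K \<alpha>0 CT (\<epsilon>::int) u v F x =
     - (avgstar_vec T K \<alpha>0 CT (kgrad K u) F x \<bullet> jump T v F x)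
     + of_int \<epsilon> * - (avgstar_vec T K \<alpha>0 CT (kgrad K v) F x \<bullet> jump T u F x)
     + rho0 T K \<alpha>0 CT F * (jump T u F x \<bullet> jump T v F x)
     - of_int \<epsilon> * (if int_face T F
         then rho1 T K \<alpha>0 CT F * njump T (kgrad K u) F x * njump T (kgrad K v) F x else 0)"

definition trace_coupling where
  "trace_coupling T K \<alpha>0 CT (\<epsilon>::int) v F x =
     (\<Sum>E\<in>els T F. - tau K \<alpha>0 CT E F * v E x + of_int \<epsilon> * (kgrad K v E x \<bullet> onormal E F))"

lemma a_hip_eq_face_sum:
  assumes T: "conforming_simplicial_mesh T \<Omega>" and u: "Vh T k u" and v: "Vh T k v"
    and uh: "\<And>F. F \<in> faces T \<Longrightarrow> continuous_on F (uh F)"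
    and vh: "\<And>F. F \<in> faces T \<Longrightarrow> continuous_on F (vh F)"
  shows "a_hip T K \<alpha>0 CT \<epsilon> (u, uh) (v, vh) = (\<Sum>E\<in>T. vol_int E (\<lambda>x. kgrad K u E x \<bullet> grad (v E) x))
     + (\<Sum>F\<in>faces T. face_int F (hip_face_integrand T K \<alpha>0 CT \<epsilon> u uh v vh F))"
proof -
  let ?A = "\<lambda>E F x. (- kgrad K u E x + tau K \<alpha>0 CT E F *\<^sub>R ((u E x - uh F x) *\<^sub>R onormal E F))
            \<bullet> ((v E x - vh F x) *\<^sub>R onormal E F)"
  let ?B = "\<lambda>E F x. (- kgrad K v E x) \<bullet> ((u E x - uh F x) *\<^sub>R onormal E F)"
  have face: "(\<Sum>E\<in>els T F. face_int F (?A E F)) + \<epsilon> * (\<Sum>E\<in>els T F. face_int F (?B E F))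
      = face_int F (hip_face_integrand T K \<alpha>0 CT \<epsilon> u uh v vh F)" if F: "F \<in> faces T" for F
  proof -
    note cont = continuous_on_poly_fun[OF poly_fun_Vh[OF u]] continuous_on_kgrad[OF poly_fun_Vh[OF u]]
      continuous_on_poly_fun[OF poly_fun_Vh[OF v]] continuous_on_kgrad[OF poly_fun_Vh[OF v]]
      uh[OF F] vh[OF F]
    have A: "continuous_on F (?A E F)" and B: "continuous_on F (?B E F)" for E
      by (intro continuous_intros cont)+
    show ?thesis
      unfolding hip_face_integrand_def
      using flat_face_mesh_face[OF T F] A B
      by (simp add: face_int_sum face_int_add face_int_cmult continuous_on_sum continuous_on_mult_left)
  qed
  have "a_hip T K \<alpha>0 CT \<epsilon> (u, uh) (v, vh) = (\<Sum>E\<in>T. vol_int E (\<lambda>x. kgrad K u E x \<bullet> grad (v E) x))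
      + (\<Sum>F\<in>faces T. (\<Sum>E\<in>els T F. face_int F (?A E F)) + \<epsilon> * (\<Sum>E\<in>els T F. face_int F (?B E F)))"
    unfolding a_hip_def Let_def fst_conv snd_conv sum_elem_faces_swap[OF T]
    by (simp add: sum.distrib sum_distrib_left)
  then show ?thesis using face by simp
qed

lemma a_dg_eq_face_sum:
  assumes T: "conforming_simplicial_mesh T \<Omega>" and u: "Vh T k u" and v: "Vh T k v"
  shows "a_dg T K \<alpha>0 CT \<epsilon> u v = (\<Sum>E\<in>T. vol_int E (\<lambda>x. kgrad K u E x \<bullet> grad (v E) x))
     + (\<Sum>F\<in>faces T. face_int F (dg_face_integrand T K \<alpha>0 CT \<epsilon> u v F))"
proof -
  let ?P = "\<lambda>u v F x. avgstar_vec T K \<alpha>0 CT (kgrad K u) F x \<bullet> jump T v F x"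
  let ?R = "\<lambda>F x. rho0 T K \<alpha>0 CT F * (jump T u F x \<bullet> jump T v F x)"
  let ?Q = "\<lambda>F x. rho1 T K \<alpha>0 CT F * njump T (kgrad K u) F x * njump T (kgrad K v) F x"
  have face: "- face_int F (?P u v F) + \<epsilon> * - face_int F (?P v u F) + face_int F (?R F)
      - \<epsilon> * (if int_face T F then face_int F (?Q F) else 0)
      = face_int F (dg_face_integrand T K \<alpha>0 CT \<epsilon> u v F)" if F: "F \<in> faces T" for F
  proof -
    note cont = continuous_on_poly_fun[OF poly_fun_Vh[OF u]] continuous_on_kgrad[OF poly_fun_Vh[OF u]]
      continuous_on_poly_fun[OF poly_fun_Vh[OF v]] continuous_on_kgrad[OF poly_fun_Vh[OF v]]
    have "continuous_on F (?P u v F)" "continuous_on F (?P v u F)" "continuous_on F (?R F)"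
      "continuous_on F (?Q F)"
      unfolding jump_def njump_def by (intro continuous_intros continuous_on_avgstar_vec cont)+
    then show ?thesis
      unfolding dg_face_integrand_def using flat_face_mesh_face[OF T F]
      by (cases "int_face T F")
        (simp_all add: face_int_add face_int_diff face_int_cmult face_int_minus
          continuous_on_add continuous_on_diff continuous_on_mult_left continuous_on_minus)
  qed
  have "a_dg T K \<alpha>0 CT \<epsilon> u v = (\<Sum>E\<in>T. vol_int E (\<lambda>x. kgrad K u E x \<bullet> grad (v E) x))
      + (\<Sum>F\<in>faces T. - face_int F (?P u v F) + \<epsilon> * - face_int F (?P v u F) + face_int F (?R F)
          - \<epsilon> * (if int_face T F then face_int F (?Q F) else 0))"
    unfolding a_dg_def a_c_def s_h_def sum.inter_filter[OF finite_faces[OF T]]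
    by (simp add: sum.distrib sum_subtractf sum_negf sum_distrib_left algebra_simps)
  then show ?thesis using face by simp
qed

lemma hip_face_integrand_int_face:
  assumes els: "els T F = {E1, E2}" "E1 \<noteq> E2" and opp: "onormal E2 F = - onormal E1 F"
    and n: "norm (onormal E1 F) = 1" and F: "int_face T F" "x \<in> F"
    and S: "tau K \<alpha>0 CT E1 F + tau K \<alpha>0 CT E2 F \<noteq> 0"
  shows "hip_face_integrand T K \<alpha>0 CT \<epsilon> u uh v vh F x = dg_face_integrand T K \<alpha>0 CT \<epsilon> u v F x
     + (uh F x - uhat_of T K \<alpha>0 CT u F x)
       * (trace_coupling T K \<alpha>0 CT \<epsilon> v F x + (\<Sum>E\<in>els T F. tau K \<alpha>0 CT E F) * vh F x)"
proof -
  define n1 where "n1 = onormal E1 F"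
  define t1 where "t1 = tau K \<alpha>0 CT E1 F"
  define t2 where "t2 = tau K \<alpha>0 CT E2 F"
  define p where "p = inverse (t1 + t2)"
  have nn: "n1 \<bullet> n1 = 1" using n unfolding n1_def by (simp add: dot_square_norm)
  have p: "p * (t1 + t2) = 1" unfolding p_def using S t1_def t2_def by simp
  \<comment> \<open>after substituting n2 = - n1 and omega_i = t_i / (t1 + t2) this is a polynomial identity\<close>
  show ?thesis
    unfolding hip_face_integrand_def dg_face_integrand_def trace_coupling_def uhat_of_def avg_def
      avgstar_vec_def jump_def njump_def rho0_def rho1_def omg_def
    by (simp add: F els opp flip: n1_def t1_def t2_def)
      (simp only: inner_add_left inner_add_right inner_diff_left inner_diff_right inner_scaleR_left
        inner_scaleR_right inner_minus_left inner_minus_right nn divide_inverse flip: p_def,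
       insert p, algebra)
qed

lemma hip_face_integrand_bdry_face:
  assumes els: "els T F = {E}" and F: "\<not> int_face T F"
    and n: "norm (onormal E F) = 1" and uh: "uh F x = 0" and vh: "vh F x = 0"
  shows "hip_face_integrand T K \<alpha>0 CT \<epsilon> u uh v vh F x = dg_face_integrand T K \<alpha>0 CT \<epsilon> u v F x"
proof -
  define n1 where "n1 = onormal E F"
  have nn: "n1 \<bullet> n1 = 1" using n unfolding n1_def by (simp add: dot_square_norm)
  show ?thesis
    unfolding hip_face_integrand_def dg_face_integrand_def avgstar_vec_def jump_def njump_def rho0_def
    by (simp add: F els uh vh flip: n1_def)
      (simp add: nn algebra_simps)
qed

lemma hip_face_integrand_eq:
  fixes T :: "(real^'d) set set"
  assumes T: "conforming_simplicial_mesh T \<Omega>"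
    and tau: "\<And>E F. E \<in> T \<Longrightarrow> F facet_of E \<Longrightarrow> tau K \<alpha>0 CT E F > 0"
    and F: "F \<in> faces T" "x \<in> F" and bdry: "\<not> int_face T F \<Longrightarrow> uh F x = 0 \<and> vh F x = 0"
  shows "hip_face_integrand T K \<alpha>0 CT \<epsilon> u uh v vh F x = dg_face_integrand T K \<alpha>0 CT \<epsilon> u v F x
     + (uh F x - uhat_of T K \<alpha>0 CT u F x)
       * (trace_coupling T K \<alpha>0 CT \<epsilon> v F x + (\<Sum>E\<in>els T F. tau K \<alpha>0 CT E F) * vh F x)"
proof (cases "int_face T F")
  case True
  obtain E1 E2 where E: "E1 \<noteq> E2" "els T F = {E1, E2}" "E1 \<in> T" "E2 \<in> T" "F facet_of E1"
    "F facet_of E2" "onormal E2 F = - onormal E1 F"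
    by (rule els_int_face[OF T True])
  show ?thesis
  proof (rule hip_face_integrand_int_face[OF E(2,1,7) _ True F(2)])
    show "norm (onormal E1 F) = 1" by (rule norm_onormal[OF mesh_simplex[OF T E(3)] E(5)])
    show "tau K \<alpha>0 CT E1 F + tau K \<alpha>0 CT E2 F \<noteq> 0" using tau[OF E(3,5)] tau[OF E(4,6)] by simp
  qed
next
  case False
  obtain E where E: "els T F = {E}" "E \<in> T" "F facet_of E" by (rule els_bdry_face[OF F(1) False])
  have "uhat_of T K \<alpha>0 CT u F x = 0" unfolding uhat_of_def using False by simp
  then show ?thesis
    using hip_face_integrand_bdry_face[OF E(1) False norm_onormal[OF mesh_simplex[OF T E(2)] E(3)]]
      bdry False by simp
qed

lemma continuous_on_dg_face_integrand:
  assumes "Vh T k u" "Vh T k v"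
  shows "continuous_on S (dg_face_integrand T K \<alpha>0 CT \<epsilon> u v F)"
proof -
  note cont = continuous_on_poly_fun[OF poly_fun_Vh[OF assms(1)]]
    continuous_on_kgrad[OF poly_fun_Vh[OF assms(1)]]
    continuous_on_poly_fun[OF poly_fun_Vh[OF assms(2)]]
    continuous_on_kgrad[OF poly_fun_Vh[OF assms(2)]]
  show ?thesis
    unfolding dg_face_integrand_def[abs_def] jump_def njump_def
    by (cases "int_face T F") (simp_all, (intro continuous_intros continuous_on_avgstar_vec cont)+)
qed

lemma continuous_on_trace_coupling: "Vh T k v \<Longrightarrow> continuous_on S (trace_coupling T K \<alpha>0 CT \<epsilon> v F)"
  unfolding trace_coupling_def[abs_def]
  by (intro continuous_intros continuous_on_poly_fun continuous_on_kgrad poly_fun_Vh)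

lemma poly_fun_trace_coupling: "Vh T k v \<Longrightarrow> poly_fun k (trace_coupling T K \<alpha>0 CT \<epsilon> v F)"
  unfolding trace_coupling_def[abs_def] kgrad_def
  by (intro poly_fun_sum poly_fun_add poly_fun_cmult poly_fun_flux poly_fun_Vh)

lemma trace_coupling_zero: "trace_coupling T K \<alpha>0 CT \<epsilon> (\<lambda>E x. 0) F x = 0"
  unfolding trace_coupling_def kgrad_zero by simp

lemma a_hip_eq_a_dg_plus_coupling:
  assumes T: "conforming_simplicial_mesh T \<Omega>"
    and tau: "\<And>E F. E \<in> T \<Longrightarrow> F facet_of E \<Longrightarrow> tau K \<alpha>0 CT E F > 0"
    and u: "Vh T k u" and uh: "Vhat T k uh" and v: "Vh T k v" and vh: "Vhat T k vh"
  shows "a_hip T K \<alpha>0 CT \<epsilon> (u, uh) (v, vh) = a_dg T K \<alpha>0 CT \<epsilon> u v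
     + (\<Sum>F\<in>faces T. face_int F (\<lambda>x. (uh F x - uhat_of T K \<alpha>0 CT u F x)
         * (trace_coupling T K \<alpha>0 CT \<epsilon> v F x + (\<Sum>E\<in>els T F. tau K \<alpha>0 CT E F) * vh F x)))"
    (is "_ = _ + (\<Sum>F\<in>faces T. face_int F (?Z F))")
proof -
  have face: "face_int F (hip_face_integrand T K \<alpha>0 CT \<epsilon> u uh v vh F)
      = face_int F (dg_face_integrand T K \<alpha>0 CT \<epsilon> u v F) + face_int F (?Z F)"
    if F: "F \<in> faces T" for F
  proof -
    have "face_int F (hip_face_integrand T K \<alpha>0 CT \<epsilon> u uh v vh F)
        = face_int F (\<lambda>x. dg_face_integrand T K \<alpha>0 CT \<epsilon> u v F x + ?Z F x)"
      using flat_face_mesh_face[OF T F] Vhat_bdry_face[OF uh] Vhat_bdry_face[OF vh]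
      by (intro face_int_cong hip_face_integrand_eq[OF T tau F]) auto
    also have "\<dots> = face_int F (dg_face_integrand T K \<alpha>0 CT \<epsilon> u v F) + face_int F (?Z F)"
      using flat_face_mesh_face[OF T F] continuous_on_dg_face_integrand[OF u v]
        continuous_on_Vhat[OF uh F] continuous_on_Vhat[OF Vhat_uhat_of[OF u] F]
        continuous_on_trace_coupling[OF v] continuous_on_Vhat[OF vh F]
      by (intro face_int_add continuous_intros)
    finally show ?thesis .
  qed
  have "a_hip T K \<alpha>0 CT \<epsilon> (u, uh) (v, vh) = (\<Sum>E\<in>T. vol_int E (\<lambda>x. kgrad K u E x \<bullet> grad (v E) x))
     + (\<Sum>F\<in>faces T. face_int F (hip_face_integrand T K \<alpha>0 CT \<epsilon> u uh v vh F))"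
    by (rule a_hip_eq_face_sum[OF T u v continuous_on_Vhat[OF uh] continuous_on_Vhat[OF vh]])
  then show ?thesis
    unfolding a_dg_eq_face_sum[OF T u v] by (simp add: face sum.distrib)
qed

section \<open>Equivalence of the two methods\<close>

lemma a_dg_zero_right: "a_dg T K \<alpha>0 CT \<epsilon> u (\<lambda>E x. 0) = 0"
  unfolding a_dg_def a_c_def s_h_def kgrad_zero
  by (simp add: avgstar_vec_zero jump_def njump_def vol_int_def grad_const face_int_zero)

lemma rhs_zero: "rhs T f (\<lambda>E x. 0) = 0"
  unfolding rhs_def vol_int_def by simp

lemma hip_solution_of_dg_solution:
  assumes T: "conforming_simplicial_mesh T \<Omega>"
    and tau: "\<And>E F. E \<in> T \<Longrightarrow> F facet_of E \<Longrightarrow> tau K \<alpha>0 CT E F > 0"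
    and dg: "dg_solution T K \<alpha>0 CT \<epsilon> k f u"
  shows "hip_solution T K \<alpha>0 CT \<epsilon> k f (u, uhat_of T K \<alpha>0 CT u)"
proof -
  have u: "Vh T k u" using dg unfolding dg_solution_def by blast
  have "a_hip T K \<alpha>0 CT \<epsilon> (u, uhat_of T K \<alpha>0 CT u) (v, vh) = rhs T f v"
    if v: "Vh T k v" and vh: "Vhat T k vh" for v vh
    using a_hip_eq_a_dg_plus_coupling[OF T tau u Vhat_uhat_of[OF u] v vh] dg v
    unfolding dg_solution_def by (simp add: face_int_zero)
  then show ?thesis unfolding hip_solution_def using u Vhat_uhat_of[OF u] by simp
qed

lemma dg_solution_of_hip_solution:
  assumes T: "conforming_simplicial_mesh T \<Omega>"
    and tau: "\<And>E F. E \<in> T \<Longrightarrow> F facet_of E \<Longrightarrow> tau K \<alpha>0 CT E F > 0"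
    and hip: "hip_solution T K \<alpha>0 CT \<epsilon> k f (u, uh)"
  shows "dg_solution T K \<alpha>0 CT \<epsilon> k f u"
proof -
  have u: "Vh T k u" and uh: "Vhat T k uh"
    and sol: "\<And>v vh. Vh T k v \<Longrightarrow> Vhat T k vh \<Longrightarrow> a_hip T K \<alpha>0 CT \<epsilon> (u, uh) (v, vh) = rhs T f v"
    using hip unfolding hip_solution_def by auto
  let ?d = "\<lambda>F x. uh F x - uhat_of T K \<alpha>0 CT u F x"
  let ?S = "\<lambda>F. \<Sum>E\<in>els T F. tau K \<alpha>0 CT E F"
  have S: "?S F \<noteq> 0" if F: "int_face T F" for F
  proof -
    obtain E1 E2 where "E1 \<noteq> E2" "els T F = {E1, E2}" "E1 \<in> T" "E2 \<in> T" "F facet_of E1"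
      "F facet_of E2" "onormal E2 F = - onormal E1 F" by (rule els_int_face[OF T F])
    then show ?thesis using tau[of E1 F] tau[of E2 F] by simp
  qed
  have "a_dg T K \<alpha>0 CT \<epsilon> u v = rhs T f v" if v: "Vh T k v" for v
  proof -
    let ?Q = "trace_coupling T K \<alpha>0 CT \<epsilon> v"
    \<comment> \<open>testing with the face unknown Q v / S (and no cell unknown) shows that
      the coupling term vanishes\<close>
    define w where "w F x = (if int_face T F \<and> x \<in> F then ?Q F x / ?S F else 0)" for F x
    have w: "Vhat T k w"
      unfolding w_def[abs_def]
      by (intro Vhat_int_face_polys poly_fun_divide poly_fun_trace_coupling v)
    have "0 = a_hip T K \<alpha>0 CT \<epsilon> (u, uh) (\<lambda>E x. 0, w)"
      using sol[OF Vh_zero w] by (simp add: rhs_zero)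
    also have "\<dots> = (\<Sum>F\<in>faces T. face_int F (\<lambda>x. ?d F x * (?S F * w F x)))"
      using a_hip_eq_a_dg_plus_coupling[OF T tau u uh Vh_zero w]
      by (simp add: a_dg_zero_right trace_coupling_zero)
    also have "\<dots> = (\<Sum>F\<in>faces T. face_int F (\<lambda>x. ?d F x * ?Q F x))"
    proof (intro sum.cong refl face_int_cong[OF flat_face_mesh_face[OF T]])
      fix F x assume "F \<in> faces T" "x \<in> F"
      show "?d F x * (?S F * w F x) = ?d F x * ?Q F x"
        using S[of F] Vhat_bdry_face[OF uh, of F x] \<open>x \<in> F\<close>
        by (cases "int_face T F") (simp_all add: w_def uhat_of_def)
    qed
    finally have "(\<Sum>F\<in>faces T. face_int F (\<lambda>x. ?d F x * ?Q F x)) = 0" by simp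
    moreover have "rhs T f v = a_dg T K \<alpha>0 CT \<epsilon> u v + (\<Sum>F\<in>faces T. face_int F (\<lambda>x. ?d F x * ?Q F x))"
      using sol[OF v Vhat_zero] a_hip_eq_a_dg_plus_coupling[OF T tau u uh v Vhat_zero] by simp
    ultimately show ?thesis by simp
  qed
  then show ?thesis unfolding dg_solution_def using u by blast
qed

theorem mainTheorem4:
  fixes \<Omega> :: "(real^'d) set"
    and T :: "(real^'d) set set"
    and \<kappa> :: "real^'d \<Rightarrow> real^'d^'d"
    and K :: "(real^'d) set \<Rightarrow> real^'d^'d"
    and \<kappa>min \<kappa>max CT \<alpha>0 :: real
    and k :: nat
    and \<epsilon> :: int
    and f :: "real^'d \<Rightarrow> real"
  assumes dim: "CARD('d) \<in> {2, 3}"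
    and dom: "lipschitz_domain \<Omega>" "polyhedral_domain \<Omega>"
    and mesh: "conforming_simplicial_mesh T \<Omega>"
    and h_le: "\<forall>E\<in>T. diameter E \<le> 1"
    and kbounds: "0 < \<kappa>min" "\<kappa>min \<le> \<kappa>max"
    and kappa_pc: "\<forall>E\<in>T. \<forall>x\<in>interior E. \<kappa> x = K E"
    and kappa_prop: "AE x in lebesgue. x \<in> \<Omega> \<longrightarrow>
          transpose (\<kappa> x) = \<kappa> x \<and>
          (\<forall>\<xi>. \<kappa>min * (\<xi> \<bullet> \<xi>) \<le> \<xi> \<bullet> (\<kappa> x *v \<xi>) \<and> \<xi> \<bullet> (\<kappa> x *v \<xi>) \<le> \<kappa>max * (\<xi> \<bullet> \<xi>))"
    and CT: "CT > 0"
    and trace_ineq: "\<forall>E\<in>T. \<forall>F\<in>elem_faces E. \<forall>w. poly_fun k w \<longrightarrow>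
          face_int F (\<lambda>x. (w x)\<^sup>2) \<le> CT\<^sup>2 / diameter E * vol_int E (\<lambda>x. (w x)\<^sup>2)"
    and alpha0: "\<alpha>0 > 0"
    and k: "k \<ge> 1"
    and eps: "\<epsilon> \<in> {-1, 0, 1}"
    and f_L2: "set_borel_measurable lebesgue \<Omega> f" "set_integrable lebesgue \<Omega> (\<lambda>x. (f x)\<^sup>2)"
  shows "(\<forall>u uh. hip_solution T K \<alpha>0 CT \<epsilon> k f (u, uh) \<longrightarrow> dg_solution T K \<alpha>0 CT \<epsilon> k f u)
       \<and> (\<forall>u. dg_solution T K \<alpha>0 CT \<epsilon> k f u \<longrightarrow>
            Vhat T k (uhat_of T K \<alpha>0 CT u) \<and>
            hip_solution T K \<alpha>0 CT \<epsilon> k f (u, uhat_of T K \<alpha>0 CT u) \<and>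
            ((\<exists>!w. hip_solution T K \<alpha>0 CT \<epsilon> k f w) \<longrightarrow>
               (THE w. hip_solution T K \<alpha>0 CT \<epsilon> k f w) = (u, uhat_of T K \<alpha>0 CT u)))"
proof -
  have "AE x in lebesgue. x \<in> \<Omega> \<longrightarrow> (\<forall>\<xi>. \<kappa>min * (\<xi> \<bullet> \<xi>) \<le> \<xi> \<bullet> (\<kappa> x *v \<xi>))"
    by (rule eventually_mono[OF kappa_prop]) blast
  moreover have "open \<Omega>" using dom(1) unfolding lipschitz_domain_def by blast
  ultimately have tau: "tau K \<alpha>0 CT E F > 0" if "E \<in> T" "F facet_of E" for E F
    using tau_pos_on_mesh[OF _ mesh kappa_pc _ kbounds(1) alpha0 _ that] CT by simp
  note hip = hip_solution_of_dg_solution[OF mesh tau]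
  show ?thesis
  proof (intro conjI allI impI)
    fix u uh assume "hip_solution T K \<alpha>0 CT \<epsilon> k f (u, uh)"
    then show "dg_solution T K \<alpha>0 CT \<epsilon> k f u"
      using dg_solution_of_hip_solution[OF mesh tau] by blast
  next
    fix u assume "dg_solution T K \<alpha>0 CT \<epsilon> k f u"
    then show "Vhat T k (uhat_of T K \<alpha>0 CT u)"
      unfolding dg_solution_def by (blast intro: Vhat_uhat_of)
  next
    fix u assume "dg_solution T K \<alpha>0 CT \<epsilon> k f u"
    then show "hip_solution T K \<alpha>0 CT \<epsilon> k f (u, uhat_of T K \<alpha>0 CT u)" using hip by blast
  next
    fix u assume "dg_solution T K \<alpha>0 CT \<epsilon> k f u" "\<exists>!w. hip_solution T K \<alpha>0 CT \<epsilon> k f w"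
    then show "(THE w. hip_solution T K \<alpha>0 CT \<epsilon> k f w) = (u, uhat_of T K \<alpha>0 CT u)"
      using hip by (blast intro: the1_equality)
  qed
qed

end
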